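(* Let $\lambda\in\mathcal{X}(T)^+$ and $\mu\in\Pi_G^+(\lambda)$. Let $\alpha\in\operatorname{Supp}(\lambda)$ be such that $\langle\lambda-\mu,\alpha^\vee\rangle>r_\alpha$, let $S(\alpha)$ be the connected component containing $\alpha$ of $(\Delta(\alpha)\smallsetminus\operatorname{Supp}(\mu))\cup\{\alpha\}$, and fix an extremal root $\beta$ of $S(\alpha)$. Write $I(\alpha,\beta)=\{\gamma_0,\dots,\gamma_k\}$ with $k=d(\alpha,\beta)$, $\gamma_0=\alpha$ and $\langle\gamma_i,\gamma_{i-1}^\vee\rangle\neq0$ for $i=1,\dots,k$, and let $c_i$ be the coefficient of $\gamma_i$ in the expression of $\lambda-\mu\in\mathbb{Q}[\Delta]$ as a linear combination of simple roots. Then: (i) setting $c_{k+1}=0$, for every $i\leqslant k$ one has $c_i\geqslant\dfrac{(i+1)c_{i+1}+r_\alpha+1}{i+2}$; (ii) for every $i\leqslant k$ one has $c_i\geqslant k-i+1+\dfrac{r_\alpha-k-1}{i+2}$.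
   Context: $G$ is a connected semisimple group over an algebraically closed field of characteristic zero, $T\subset B$ a maximal torus and Borel subgroup, $\Delta$ the simple roots, $\mathcal{X}(T)^+$ the dominant characters. $\Pi_G^+(\lambda)=\{\mu\in\mathcal{X}(T)^+:\lambda-\mu\in\mathbb{Q}_{\geq0}[\Delta]\}$. $\operatorname{Supp}(\lambda)=\{\alpha\in\Delta:\langle\lambda,\alpha^\vee\rangle\neq0\}$. For $\alpha\in\Delta$, $\Delta(\alpha)$ is the connected component of the Dynkin diagram containing $\alpha$ and $r_\alpha=|\Delta(\alpha)|$; for $\beta\in\Delta(\alpha)$, $d(\alpha,\beta)$ is the distance in the Dynkin diagram and $I(\alpha,\beta)$ is the minimal connected subset of $\Delta$ containing $\alpha$ and $\beta$. Connected components of subsets of $\Delta$ refer to the Dynkin diagram. An extremal root of a subset $I\subset\Delta$ is an element of $I$ adjacent in the Dynkin diagram to at most one other element of $I$. *)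

theory Defs
  imports Main "HOL.Real"
begin

text \<open>A root system is encoded by its set of simple roots Delta and its Cartan matrix
  C a b = <a, b^vee>.  Weights (elements of X(T) tensor Q = Q[Delta]) are encoded by
  their coefficient functions w.r.t. the simple roots.\<close>

definition finite_cartan :: "'a set \<Rightarrow> ('a \<Rightarrow> 'a \<Rightarrow> int) \<Rightarrow> bool" where
  "finite_cartan D C \<longleftrightarrow> finite D \<and> D \<noteq> {}
     \<and> (\<forall>a\<in>D. C a a = 2)
     \<and> (\<forall>a\<in>D. \<forall>b\<in>D. a \<noteq> b \<longrightarrow> C a b \<le> 0)
     \<and> (\<forall>a\<in>D. \<forall>b\<in>D. C a b = 0 \<longleftrightarrow> C b a = 0)
     \<and> (\<exists>d :: 'a \<Rightarrow> real. (\<forall>a\<in>D. d a > 0)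
          \<and> (\<forall>a\<in>D. \<forall>b\<in>D. real_of_int (C a b) * d b = real_of_int (C b a) * d a)
          \<and> (\<forall>x :: 'a \<Rightarrow> real. (\<exists>a\<in>D. x a \<noteq> 0) \<longrightarrow>
               (\<Sum>a\<in>D. \<Sum>b\<in>D. x a * real_of_int (C a b) * d b * x b) > 0))"

definition pairing :: "'a set \<Rightarrow> ('a \<Rightarrow> 'a \<Rightarrow> int) \<Rightarrow> ('a \<Rightarrow> rat) \<Rightarrow> 'a \<Rightarrow> rat" where
  "pairing D C x a = (\<Sum>g\<in>D. x g * of_int (C g a))"

definition is_weight :: "'a set \<Rightarrow> ('a \<Rightarrow> 'a \<Rightarrow> int) \<Rightarrow> ('a \<Rightarrow> rat) \<Rightarrow> bool" where
  "is_weight D C x \<longleftrightarrow> (\<forall>a\<in>D. pairing D C x a \<in> \<int>)"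

definition dominant :: "'a set \<Rightarrow> ('a \<Rightarrow> 'a \<Rightarrow> int) \<Rightarrow> ('a \<Rightarrow> rat) \<Rightarrow> bool" where
  "dominant D C x \<longleftrightarrow> is_weight D C x \<and> (\<forall>a\<in>D. pairing D C x a \<ge> 0)"

definition PiPlus :: "'a set \<Rightarrow> ('a \<Rightarrow> 'a \<Rightarrow> int) \<Rightarrow> ('a \<Rightarrow> rat) \<Rightarrow> ('a \<Rightarrow> rat) set" where
  "PiPlus D C lam = {mu. dominant D C mu \<and> (\<forall>g\<in>D. lam g - mu g \<ge> 0)}"

definition Supp :: "'a set \<Rightarrow> ('a \<Rightarrow> 'a \<Rightarrow> int) \<Rightarrow> ('a \<Rightarrow> rat) \<Rightarrow> 'a set" where
  "Supp D C x = {a\<in>D. pairing D C x a \<noteq> 0}"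

definition adj :: "('a \<Rightarrow> 'a \<Rightarrow> int) \<Rightarrow> 'a \<Rightarrow> 'a \<Rightarrow> bool" where
  "adj C a b \<longleftrightarrow> a \<noteq> b \<and> C a b \<noteq> 0"

definition walk :: "('a \<Rightarrow> 'a \<Rightarrow> int) \<Rightarrow> 'a set \<Rightarrow> (nat \<Rightarrow> 'a) \<Rightarrow> nat \<Rightarrow> 'a \<Rightarrow> 'a \<Rightarrow> bool" where
  "walk C X p n a b \<longleftrightarrow> p 0 = a \<and> p n = b \<and> (\<forall>i\<le>n. p i \<in> X)
      \<and> (\<forall>i<n. adj C (p i) (p (Suc i)))"

definition comp :: "('a \<Rightarrow> 'a \<Rightarrow> int) \<Rightarrow> 'a set \<Rightarrow> 'a \<Rightarrow> 'a set" where
  "comp C X a = {b. \<exists>p n. walk C X p n a b}"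

definition connected_sub :: "('a \<Rightarrow> 'a \<Rightarrow> int) \<Rightarrow> 'a set \<Rightarrow> bool" where
  "connected_sub C S \<longleftrightarrow> (\<forall>a\<in>S. \<forall>b\<in>S. \<exists>p n. walk C S p n a b)"

definition DynComp :: "'a set \<Rightarrow> ('a \<Rightarrow> 'a \<Rightarrow> int) \<Rightarrow> 'a \<Rightarrow> 'a set" where
  "DynComp D C a = comp C D a"

definition rk :: "'a set \<Rightarrow> ('a \<Rightarrow> 'a \<Rightarrow> int) \<Rightarrow> 'a \<Rightarrow> nat" where
  "rk D C a = card (DynComp D C a)"

definition dist :: "'a set \<Rightarrow> ('a \<Rightarrow> 'a \<Rightarrow> int) \<Rightarrow> 'a \<Rightarrow> 'a \<Rightarrow> nat" where
  "dist D C a b = (LEAST n. \<exists>p. walk C D p n a b)"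

definition Iab :: "'a set \<Rightarrow> ('a \<Rightarrow> 'a \<Rightarrow> int) \<Rightarrow> 'a \<Rightarrow> 'a \<Rightarrow> 'a set" where
  "Iab D C a b = \<Inter> {S. S \<subseteq> D \<and> connected_sub C S \<and> a \<in> S \<and> b \<in> S}"

definition extremal :: "('a \<Rightarrow> 'a \<Rightarrow> int) \<Rightarrow> 'a set \<Rightarrow> 'a \<Rightarrow> bool" where
  "extremal C I b \<longleftrightarrow> b \<in> I \<and> card {g\<in>I. adj C b g} \<le> 1"

end

theory Submission
  imports Defs
begin

text \<open>Let c_i be the coefficient of gamma_i in lambda - mu, and c_(k+1) = 0. As lambda - mu
  has nonnegative coefficients and the off-diagonal Cartan entries are nonpositive integers,
  the pairing of lambda - mu with the coroot of gamma_i is at most 2 c_i - c_(i-1) - c_(i+1).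
  At alpha this pairing is an integer larger than r_alpha; at gamma_i with i >= 1 it is
  nonnegative, since gamma_i is not in Supp mu and lambda is dominant. So c is discretely
  concave with an initial jump of at least r_alpha + 1, which gives (i) by induction upwards.
  The gamma_i are distinct, since a repetition would shorten a path of length k = d(alpha, beta);
  hence r_alpha >= k + 1, and (ii) follows from (i) by induction downwards from c_(k+1) = 0.\<close>

lemma cartan_zero_sym:
  assumes "finite_cartan D C" "a \<in> D" "b \<in> D"
  shows "C a b = 0 \<longleftrightarrow> C b a = 0"
  using assms unfolding finite_cartan_def by blast

lemma adj_sym:
  assumes "finite_cartan D C" "a \<in> D" "b \<in> D" "adj C a b"
  shows "adj C b a"
  using assms cartan_zero_sym[OF assms(1-3)] unfolding adj_def by auto

lemma walk_reverse:
  assumes fc: "finite_cartan D C" and "X \<subseteq> D" and w: "walk C X p n a b"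
  shows "walk C X (\<lambda>t. p (n - t)) n b a"
  unfolding walk_def
proof (intro conjI allI impI)
  fix t assume "t < n"
  define s where "s = n - Suc t"
  have s: "s < n" "n - t = Suc s" "n - Suc t = s" using \<open>t < n\<close> unfolding s_def by arith+
  have "adj C (p s) (p (Suc s))" "p s \<in> D" "p (Suc s) \<in> D"
    using w s \<open>X \<subseteq> D\<close> unfolding walk_def by auto
  then have "adj C (p (Suc s)) (p s)" using adj_sym[OF fc] by blast
  then show "adj C (p (n - t)) (p (n - Suc t))" using s by simp
qed (use w in \<open>auto simp: walk_def\<close>)

lemma walk_segment:
  assumes w: "walk C X p n a b" and "i \<le> j" "j \<le> n"
  shows "walk C (p ` {0..n}) (\<lambda>t. p (i + t)) (j - i) (p i) (p j)"
  using assms unfolding walk_def by auto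

lemma connected_sub_walk_image:
  assumes fc: "finite_cartan D C" and "X \<subseteq> D" and w: "walk C X p n a b"
  shows "connected_sub C (p ` {0..n})"
  unfolding connected_sub_def
proof (intro ballI)
  fix u v assume "u \<in> p ` {0..n}" "v \<in> p ` {0..n}"
  then obtain i j where ij: "i \<le> n" "j \<le> n" "u = p i" "v = p j" by auto
  have "p ` {0..n} \<subseteq> X" using w unfolding walk_def by auto
  then have PD: "p ` {0..n} \<subseteq> D" using \<open>X \<subseteq> D\<close> by (rule order.trans)
  show "\<exists>q m. walk C (p ` {0..n}) q m u v"
  proof (cases "i \<le> j")
    case True
    then show ?thesis using walk_segment[OF w True \<open>j \<le> n\<close>] ij by blast
  next
    case False
    then have "j \<le> i" by simp
    then show ?thesis using walk_reverse[OF fc PD walk_segment[OF w \<open>j \<le> i\<close> \<open>i \<le> n\<close>]] ij by blast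
  qed
qed

lemma Iab_subset_walk_image:
  assumes "finite_cartan D C" and "X \<subseteq> D" and w: "walk C X p n a b"
  shows "Iab D C a b \<subseteq> p ` {0..n}"
proof -
  have "p ` {0..n} \<subseteq> D" "a \<in> p ` {0..n}" "b \<in> p ` {0..n}"
    using w \<open>X \<subseteq> D\<close> unfolding walk_def by force+
  then show ?thesis
    unfolding Iab_def using connected_sub_walk_image[OF assms] by (intro Inter_lower) auto
qed

lemma dist_le_walk:
  assumes "walk C D p n a b"
  shows "dist D C a b \<le> n"
  unfolding dist_def using assms by (intro Least_le) blast

text \<open>Consecutive members of a chain with nonzero Cartan entries may coincide, as \<open>C a a = 2\<close>.\<close>

lemma stuttering_chain_injective_walk:
  fixes \<gamma> :: "nat \<Rightarrow> 'a"
  assumes "\<forall>i<m. \<gamma> (Suc i) = \<gamma> i \<or> adj C (\<gamma> i) (\<gamma> (Suc i))"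
    and "\<forall>i\<le>m. \<gamma> i \<in> X"
  shows "\<exists>p n. walk C X p n (\<gamma> 0) (\<gamma> m) \<and> inj_on p {0..n} \<and> p ` {0..n} \<subseteq> \<gamma> ` {0..m}"
  using assms
proof (induction m)
  case 0
  have "walk C X (\<lambda>_. \<gamma> 0) 0 (\<gamma> 0) (\<gamma> 0)" using 0 by (simp add: walk_def)
  then show ?case by fastforce
next
  case (Suc m)
  then obtain p n where p: "walk C X p n (\<gamma> 0) (\<gamma> m)" "inj_on p {0..n}" "p ` {0..n} \<subseteq> \<gamma> ` {0..m}"
    by auto
  have mono: "\<gamma> ` {0..m} \<subseteq> \<gamma> ` {0..Suc m}" by auto
  consider "\<gamma> (Suc m) = \<gamma> m" | "\<gamma> (Suc m) \<in> p ` {0..n}"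
    | "adj C (\<gamma> m) (\<gamma> (Suc m))" "\<gamma> (Suc m) \<notin> p ` {0..n}"
    using Suc.prems(1) by auto
  then show ?case
  proof cases
    case 1
    then show ?thesis using p mono by (metis order.trans)
  next
    case 2
    then obtain l where l: "l \<le> n" "p l = \<gamma> (Suc m)" by auto
    have "walk C X p l (\<gamma> 0) (\<gamma> (Suc m))" using p(1) l unfolding walk_def by auto
    moreover have "inj_on p {0..l}" using p(2) l by (auto intro: inj_on_subset)
    moreover have "p ` {0..l} \<subseteq> \<gamma> ` {0..Suc m}" using p(3) l mono by fastforce
    ultimately show ?thesis by blast
  next
    case 3
    define p' where "p' = p(Suc n := \<gamma> (Suc m))"
    have range: "{0..Suc n} = insert (Suc n) {0..n}" by (simp add: atLeastAtMostSuc_conv)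
    have same: "p' ` {0..n} = p ` {0..n}" unfolding p'_def by (simp add: fun_upd_image)
    have "inj_on p' {0..n}" unfolding p'_def using p(2) 3(2) by (rule inj_on_fun_updI)
    have "walk C X p' (Suc n) (\<gamma> 0) (\<gamma> (Suc m))"
      unfolding walk_def
    proof (intro conjI allI impI)
      fix i assume "i \<le> Suc n"
      then show "p' i \<in> X"
        using p(1) Suc.prems(2) unfolding walk_def p'_def by (cases "i = Suc n") auto
    next
      fix i assume "i < Suc n"
      then show "adj C (p' i) (p' (Suc i))"
        using p(1) 3(1) unfolding walk_def p'_def by (cases "i = n") auto
    qed (use p(1) in \<open>simp_all add: walk_def p'_def\<close>)
    moreover have "inj_on p' {0..Suc n}"
      using \<open>inj_on p' {0..n}\<close> 3(2) same unfolding range by (simp add: p'_def)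
    moreover have "p' ` {0..Suc n} \<subseteq> \<gamma> ` {0..Suc m}"
      using p(3) mono same unfolding range by (auto simp: p'_def)
    ultimately show ?thesis by blast
  qed
qed

lemma comp_subset: "comp C X a \<subseteq> X"
  unfolding comp_def walk_def by auto

lemma self_in_comp: "a \<in> X \<Longrightarrow> a \<in> comp C X a"
  unfolding comp_def walk_def by (intro CollectI exI[of _ "\<lambda>_. a"] exI[of _ 0]) simp

lemma Iab_subset_comp:
  assumes "finite_cartan D C" and "X \<subseteq> D" and "b \<in> comp C X a"
  shows "Iab D C a b \<subseteq> X"
proof -
  obtain p n where p: "walk C X p n a b" using \<open>b \<in> comp C X a\<close> unfolding comp_def by blast
  have "p ` {0..n} \<subseteq> X" using p unfolding walk_def by auto
  with Iab_subset_walk_image[OF assms(1,2) p] show ?thesis by (rule order.trans)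
qed

lemma card_le_rk:
  assumes "finite_cartan D C" and "S \<subseteq> DynComp D C a"
  shows "card S \<le> rk D C a"
proof -
  have "DynComp D C a \<subseteq> D" unfolding DynComp_def by (rule comp_subset)
  then have "finite (DynComp D C a)"
    using assms(1) unfolding finite_cartan_def by (blast intro: finite_subset)
  then show ?thesis unfolding rk_def using assms(2) by (rule card_mono)
qed

lemma geodesic_chain_inj_on:
  assumes fc: "finite_cartan D C" and inD: "\<forall>i\<le>k. \<gamma> i \<in> D"
    and linked: "\<forall>i\<in>{1..k}. C (\<gamma> i) (\<gamma> (i - 1)) \<noteq> 0"
    and "j \<le> k" and geodesic: "k = dist D C (\<gamma> 0) (\<gamma> j)"
  shows "inj_on \<gamma> {0..k}"
proof -
  have "\<forall>i<j. \<gamma> (Suc i) = \<gamma> i \<or> adj C (\<gamma> i) (\<gamma> (Suc i))"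
  proof (intro allI impI)
    fix i assume "i < j"
    then have "C (\<gamma> (Suc i)) (\<gamma> i) \<noteq> 0" "\<gamma> i \<in> D" "\<gamma> (Suc i) \<in> D"
      using bspec[OF linked, of "Suc i"] inD \<open>j \<le> k\<close> by auto
    then have "C (\<gamma> i) (\<gamma> (Suc i)) \<noteq> 0" using cartan_zero_sym[OF fc] by blast
    then show "\<gamma> (Suc i) = \<gamma> i \<or> adj C (\<gamma> i) (\<gamma> (Suc i))" by (auto simp: adj_def)
  qed
  moreover have "\<forall>i\<le>j. \<gamma> i \<in> D" using inD \<open>j \<le> k\<close> by auto
  ultimately have
    "\<exists>p n. walk C D p n (\<gamma> 0) (\<gamma> j) \<and> inj_on p {0..n} \<and> p ` {0..n} \<subseteq> \<gamma> ` {0..j}"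
    by (rule stuttering_chain_injective_walk)
  then obtain p n where p: "walk C D p n (\<gamma> 0) (\<gamma> j)" "inj_on p {0..n}"
    "p ` {0..n} \<subseteq> \<gamma> ` {0..j}"
    by blast
  have "\<gamma> ` {0..j} \<subseteq> \<gamma> ` {0..k}" using \<open>j \<le> k\<close> by (intro image_mono) simp
  with p(3) have sub: "p ` {0..n} \<subseteq> \<gamma> ` {0..k}" by (rule order.trans)
  have "card {0..k} \<le> n + 1" using dist_le_walk[OF p(1)] geodesic by simp
  also have "n + 1 = card (p ` {0..n})" using p(2) by (simp add: card_image)
  also have "\<dots> \<le> card (\<gamma> ` {0..k})" using sub by (rule card_mono[rotated]) simp
  finally have "card {0..k} \<le> card (\<gamma> ` {0..k})" .
  moreover have "card (\<gamma> ` {0..k}) \<le> card {0..k}" by (rule card_image_le) simp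
  ultimately show ?thesis by (intro eq_card_imp_inj_on) simp_all
qed

lemma pairing_diff:
  "pairing D C (\<lambda>g. x g - y g) a = pairing D C x a - pairing D C y a"
  unfolding pairing_def by (simp add: sum_subtractf left_diff_distrib)

lemma pairing_le_neighbours:
  assumes fc: "finite_cartan D C" and nonneg: "\<forall>g\<in>D. 0 \<le> x g"
    and "a \<in> D" and B: "B \<subseteq> D - {a}" and linked: "\<forall>b\<in>B. C b a \<noteq> 0"
  shows "pairing D C x a \<le> 2 * x a - sum x B"
proof -
  from fc have "finite D" and diag: "C a a = 2" and offdiag: "\<forall>g\<in>D. g \<noteq> a \<longrightarrow> C g a \<le> 0"
    using \<open>a \<in> D\<close> unfolding finite_cartan_def by auto
  define f where "f g = x g * of_int (C g a)" for g
  have fin: "finite (D - {a})" using \<open>finite D\<close> by simp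
  have "pairing D C x a = f a + sum f B + sum f (D - {a} - B)"
    using \<open>finite D\<close> \<open>a \<in> D\<close> sum.subset_diff[OF B fin]
    unfolding pairing_def f_def by (simp add: sum.remove add.commute)
  also have "sum f (D - {a} - B) \<le> 0"
    using nonneg offdiag unfolding f_def by (intro sum_nonpos) (auto simp: mult_nonneg_nonpos)
  also have "sum f B \<le> sum (\<lambda>b. - x b) B"
  proof (intro sum_mono)
    fix b assume "b \<in> B"
    then have "C b a \<le> -1" using linked offdiag B by force
    moreover have "0 \<le> x b" using nonneg B \<open>b \<in> B\<close> by auto
    ultimately have "x b * of_int (C b a) \<le> x b * -1" by (intro mult_left_mono) simp_all
    then show "f b \<le> - x b" unfolding f_def by simp
  qed
  finally show ?thesis using diag unfolding f_def by (simp add: sum_negf)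
qed

lemma chain_pairing_le:
  fixes \<gamma> :: "nat \<Rightarrow> 'a"
  assumes fc: "finite_cartan D C" and nonneg: "\<forall>g\<in>D. 0 \<le> x g"
    and inD: "\<forall>i\<le>k. \<gamma> i \<in> D" and inj: "inj_on \<gamma> {0..k}"
    and linked: "\<forall>i\<in>{1..k}. C (\<gamma> i) (\<gamma> (i - 1)) \<noteq> 0" and "i \<le> k"
  defines "c \<equiv> \<lambda>i. if i \<le> k then x (\<gamma> i) else 0"
  shows "pairing D C x (\<gamma> i) \<le> 2 * c i - (if i = 0 then 0 else c (i - 1)) - c (i + 1)"
proof -
  have ne: "\<gamma> s \<noteq> \<gamma> t" if "s \<le> k" "t \<le> k" "s \<noteq> t" for s t
    using inj that by (auto simp: inj_on_def)
  define B where "B = (if i = 0 then {} else {\<gamma> (i - 1)}) \<union> (if i < k then {\<gamma> (i + 1)} else {})"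
  have left: "\<gamma> (i - 1) \<in> D - {\<gamma> i} \<and> C (\<gamma> (i - 1)) (\<gamma> i) \<noteq> 0" if "i \<noteq> 0"
  proof -
    have "C (\<gamma> i) (\<gamma> (i - 1)) \<noteq> 0" using linked that \<open>i \<le> k\<close> by simp
    moreover have "\<gamma> i \<in> D" "\<gamma> (i - 1) \<in> D" using inD \<open>i \<le> k\<close> by simp_all
    moreover have "\<gamma> (i - 1) \<noteq> \<gamma> i" using ne[of "i - 1" i] that \<open>i \<le> k\<close> by simp
    ultimately show ?thesis using cartan_zero_sym[OF fc] by blast
  qed
  have right: "\<gamma> (i + 1) \<in> D - {\<gamma> i} \<and> C (\<gamma> (i + 1)) (\<gamma> i) \<noteq> 0" if "i < k"
    using bspec[OF linked, of "i + 1"] inD ne[of "i + 1" i] that by simp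
  have "B \<subseteq> D - {\<gamma> i}" "\<forall>b\<in>B. C b (\<gamma> i) \<noteq> 0"
    unfolding B_def using left right by auto
  then have "pairing D C x (\<gamma> i) \<le> 2 * x (\<gamma> i) - sum x B"
    using pairing_le_neighbours[OF fc nonneg] inD \<open>i \<le> k\<close> by simp
  moreover have "sum x B = (if i = 0 then 0 else c (i - 1)) + c (i + 1)"
  proof -
    have "\<gamma> (i - 1) \<noteq> \<gamma> (i + 1)" if "0 < i" "i < k" using ne that by simp
    then show ?thesis using \<open>i \<le> k\<close> unfolding B_def c_def by auto
  qed
  ultimately show ?thesis using \<open>i \<le> k\<close> unfolding c_def by simp
qed

lemma Ints_less_imp_add_one_le:
  fixes a b :: "'a::linordered_idom"
  assumes "a \<in> \<int>" "b \<in> \<int>" "a < b"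
  shows "a + 1 \<le> b"
proof -
  obtain m n where mn: "a = of_int m" "b = of_int n" using assms(1,2) by (auto elim!: Ints_cases)
  with assms(3) have "m + 1 \<le> n" by simp
  then have "of_int (m + 1) \<le> (of_int n :: 'a)" by (simp only: of_int_le_iff)
  with mn show ?thesis by simp
qed

lemma discrete_concave_first_bound:
  fixes c :: "nat \<Rightarrow> 'a::linordered_field"
  assumes start: "r + 1 \<le> 2 * c 0 - c 1"
    and concave: "\<And>i. 1 \<le> i \<Longrightarrow> i \<le> k \<Longrightarrow> 0 \<le> 2 * c i - c (i - 1) - c (i + 1)"
    and "i \<le> k"
  shows "(of_nat i + 1) * c (i + 1) + r + 1 \<le> (of_nat i + 2) * c i"
  using \<open>i \<le> k\<close>
proof (induction i)
  case 0
  then show ?case using start by simp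
next
  case (Suc i)
  have "0 \<le> (of_nat i + 2) * (2 * c (Suc i) - c i - c (Suc i + 1))"
    using concave[of "Suc i"] Suc.prems by simp
  then show ?case using Suc by (simp add: algebra_simps)
qed

lemma discrete_concave_closed_bound:
  fixes c :: "nat \<Rightarrow> 'a::linordered_field"
  assumes first: "\<And>i. i \<le> k \<Longrightarrow> (of_nat i + 1) * c (i + 1) + r + 1 \<le> (of_nat i + 2) * c i"
    and last: "c (k + 1) = 0" and rank: "of_nat k + 1 \<le> r" and "i \<le> k"
  shows "of_nat k - of_nat i + 1 + (r - of_nat k - 1) / (of_nat i + 2) \<le> c i"
proof -
  have pos: "(0::'a) < of_nat j + 2" for j :: nat
    by (simp add: add_nonneg_pos)
  show ?thesis
    using \<open>i \<le> k\<close>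
  proof (induction i rule: inc_induct)
    case base
    have "r + 1 \<le> (of_nat k + 2) * c k" using first[of k] last by simp
    then show ?case using pos[of k] by (simp add: field_simps)
  next
    case (step i)
    have "0 \<le> (r - of_nat k - 1) / (of_nat (Suc i) + 2)" using rank by simp
    then have "of_nat k - of_nat i \<le> c (i + 1)"
      using step.IH step.hyps by (simp add: of_nat_diff)
    then have "(of_nat i + 1) * (of_nat k - of_nat i) \<le> (of_nat i + 1) * c (i + 1)"
      by (intro mult_left_mono) auto
    then have "(of_nat i + 1) * (of_nat k - of_nat i) + r + 1 \<le> (of_nat i + 2) * c i"
      using first[of i] step.hyps by linarith
    then show ?case using pos[of i] by (simp add: field_simps)
  qed
qed

theorem lemma2p6:
  fixes D :: "'a set" and C :: "'a \<Rightarrow> 'a \<Rightarrow> int"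
    and lam mu :: "'a \<Rightarrow> rat" and \<alpha> \<beta> :: 'a and \<gamma> :: "nat \<Rightarrow> 'a" and k :: nat
  assumes cartan: "finite_cartan D C"
    and lam_dom: "dominant D C lam"
    and mu_in: "mu \<in> PiPlus D C lam"
    and alpha_supp: "\<alpha> \<in> Supp D C lam"
    and big: "pairing D C (\<lambda>g. lam g - mu g) \<alpha> > of_nat (rk D C \<alpha>)"
    and beta_ext: "extremal C (comp C ((DynComp D C \<alpha> - Supp D C mu) \<union> {\<alpha>}) \<alpha>) \<beta>"
    and k_def: "k = dist D C \<alpha> \<beta>"
    and gamma0: "\<gamma> 0 = \<alpha>"
    and gammaI: "\<gamma> ` {0..k} = Iab D C \<alpha> \<beta>"
    and gamma_adj: "\<forall>i\<in>{1..k}. C (\<gamma> i) (\<gamma> (i - 1)) \<noteq> 0"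
  shows "let r = rat_of_nat (rk D C \<alpha>);
             c = (\<lambda>i. if i \<le> k then lam (\<gamma> i) - mu (\<gamma> i) else 0)
         in (\<forall>i\<le>k. c i \<ge> ((of_nat i + 1) * c (i + 1) + r + 1) / (of_nat i + 2))
          \<and> (\<forall>i\<le>k. c i \<ge> of_nat k - of_nat i + 1 + (r - of_nat k - 1) / (of_nat i + 2))"
proof -
  define X where "X = (DynComp D C \<alpha> - Supp D C mu) \<union> {\<alpha>}"
  define x where "x = (\<lambda>g. lam g - mu g)"
  define r where "r = rat_of_nat (rk D C \<alpha>)"
  define c where "c = (\<lambda>i. if i \<le> k then x (\<gamma> i) else 0)"
  have "\<alpha> \<in> D" using alpha_supp by (simp add: Supp_def)
  have XDyn: "X \<subseteq> DynComp D C \<alpha>"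
    using self_in_comp[OF \<open>\<alpha> \<in> D\<close>] unfolding X_def DynComp_def by auto
  moreover have "DynComp D C \<alpha> \<subseteq> D" unfolding DynComp_def by (rule comp_subset)
  ultimately have XD: "X \<subseteq> D" by (rule order.trans)
  have "\<gamma> ` {0..k} \<subseteq> X"
    using Iab_subset_comp[OF cartan XD] beta_ext gammaI unfolding extremal_def X_def by simp
  then have inX: "\<forall>i\<le>k. \<gamma> i \<in> X" by auto
  with XD have inD: "\<forall>i\<le>k. \<gamma> i \<in> D" by blast
  have "\<beta> \<in> Iab D C \<alpha> \<beta>" unfolding Iab_def by blast
  then obtain j where "j \<le> k" "\<gamma> j = \<beta>" using gammaI by (metis atLeastAtMost_iff imageE)
  then have inj: "inj_on \<gamma> {0..k}"
    using geodesic_chain_inj_on[OF cartan inD gamma_adj] k_def gamma0 by blast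
  have "k + 1 = card (\<gamma> ` {0..k})" using inj by (simp add: card_image)
  also have "\<dots> \<le> rk D C \<alpha>" using card_le_rk[OF cartan] \<open>\<gamma> ` {0..k} \<subseteq> X\<close> XDyn by blast
  finally have rank: "of_nat k + 1 \<le> r" unfolding r_def by simp
  have nonneg: "\<forall>g\<in>D. 0 \<le> x g" using mu_in by (simp add: PiPlus_def x_def)
  note bound = chain_pairing_le[OF cartan nonneg inD inj gamma_adj]
  have "pairing D C x \<alpha> \<in> \<int>"
    using lam_dom mu_in \<open>\<alpha> \<in> D\<close> unfolding x_def pairing_diff
    by (auto simp: dominant_def is_weight_def PiPlus_def)
  then have "r + 1 \<le> pairing D C x \<alpha>"
    using big unfolding x_def[symmetric] r_def by (intro Ints_less_imp_add_one_le) auto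
  then have start: "r + 1 \<le> 2 * c 0 - c 1"
    using bound[of 0] gamma0 unfolding c_def by (cases "k = 0") auto
  have concave: "0 \<le> 2 * c i - c (i - 1) - c (i + 1)" if "1 \<le> i" "i \<le> k" for i
  proof -
    have "\<gamma> i \<noteq> \<alpha>" using inj gamma0 that by (metis atLeastAtMost_iff inj_onD le0 not_one_le_zero)
    then have "\<gamma> i \<in> D - Supp D C mu" using inX inD that unfolding X_def by auto
    then have "0 \<le> pairing D C x (\<gamma> i)"
      using lam_dom unfolding x_def pairing_diff by (auto simp: Supp_def dominant_def)
    then show ?thesis using bound[of i] that unfolding c_def by simp
  qed
  note first = discrete_concave_first_bound[OF start concave]
  have "c (k + 1) = 0" unfolding c_def by simp
  note closed = discrete_concave_closed_bound[OF first this rank]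
  have pos: "0 < (of_nat i + 2 :: rat)" for i by (simp add: add_nonneg_pos)
  show ?thesis
    using first closed pos
    unfolding Let_def r_def[symmetric] x_def c_def[unfolded x_def, symmetric]
    by (auto simp: divide_le_eq mult.commute)
qed

end
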